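(* Let $\lambda\in\Lambda$ be such that $V_O\cap V_\lambda\neq\emptyset$. Then $V_O\cap V_\lambda$ is contained in an affine subspace of $H$ of codimension equal to the genus of the oriented graph $\mathrm{supp}(\lambda)$. In particular, if $V_O\cap V_\lambda$ is a face of codimension one of $V_O$, then $\mathrm{supp}(\lambda)$ is a circuit $C$ and $\lambda=x^C$.
   Context: $G=(V,E)$ is a finite connected graph, possibly with parallel edges and loops; $\mathbb E$ is the set of oriented edges ($e$ and its reverse $\bar e$). Real $1$-chains $x:\mathbb E\to\mathbb R$ satisfy $x_{\bar e}=-x_e$; $\langle x,y\rangle=\sum_{e\in E}x_ey_e$, $q(x)=\langle x,x\rangle$. A flow satisfies $\sum_{e\text{ with tail }v}x_e=0$ at every vertex $v$; $H$ is the space of real flows and $\Lambda$ the lattice of integer flows. $V_\lambda=\{x\in H: q(x-\lambda)\le q(x-\mu)\ \forall\mu\in\Lambda\}$, $O$ the origin. For a flow $x$, $\mathrm{supp}(x)=\{e\in\mathbb E: x_e>0\}$, viewed as an oriented subgraph; its genus is the first Betti number of the underlying graph. A circuit is an orientation of a cycle as a directed cycle (a loop is a circuit of length one). For an oriented subgraph $D$ (containing at most one of $e,\bar e$ per edge), $x^D$ is the $1$-chain with $x^D_e=1$ if $e\in D$, $-1$ if $\bar e\in D$, $0$ otherwise. *)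

theory Defs
  imports "HOL-Analysis.Analysis"
begin

text \<open>A finite graph (parallel edges and loops allowed) is given by a finite vertex
type 'v, a finite edge type 'e, and endpoint maps src tgt :: 'e => 'v fixing a
reference orientation of every edge. Oriented edges are pairs (e, b) :: 'e \<times> bool,
where (e, True) is e in its reference orientation (src e -> tgt e) and (e, False)
is its reverse. A real 1-chain is a vector x :: real^'e (its value on the
reference orientation); its value on the reverse orientation is - x$e.\<close>

definition otail :: "('e \<Rightarrow> 'v) \<Rightarrow> ('e \<Rightarrow> 'v) \<Rightarrow> 'e \<times> bool \<Rightarrow> 'v" where
  "otail src tgt d = (if snd d then src (fst d) else tgt (fst d))"

definition ohead :: "('e \<Rightarrow> 'v) \<Rightarrow> ('e \<Rightarrow> 'v) \<Rightarrow> 'e \<times> bool \<Rightarrow> 'v" where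
  "ohead src tgt d = (if snd d then tgt (fst d) else src (fst d))"

definition oval :: "real^'e \<Rightarrow> 'e \<times> bool \<Rightarrow> real" where
  "oval x d = (if snd d then x $ fst d else - (x $ fst d))"

definition graph_connected :: "('e::finite \<Rightarrow> 'v) \<Rightarrow> ('e \<Rightarrow> 'v) \<Rightarrow> bool" where
  "graph_connected src tgt \<longleftrightarrow>
     (\<forall>u w. (u, w) \<in> ({(src e, tgt e) | e. True} \<union> {(tgt e, src e) | e. True})\<^sup>*)"

definition qf :: "real^'e::finite \<Rightarrow> real" where
  "qf x = (\<Sum>e\<in>UNIV. (x $ e)^2)"

definition is_flow :: "('e::finite \<Rightarrow> 'v) \<Rightarrow> ('e \<Rightarrow> 'v) \<Rightarrow> real^'e \<Rightarrow> bool" where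
  "is_flow src tgt x \<longleftrightarrow>
     (\<forall>v. (\<Sum>d\<in>{d. otail src tgt d = v}. oval x d) = 0)"

definition flows :: "('e::finite \<Rightarrow> 'v) \<Rightarrow> ('e \<Rightarrow> 'v) \<Rightarrow> (real^'e) set" where
  "flows src tgt = {x. is_flow src tgt x}"

definition int_flows :: "('e::finite \<Rightarrow> 'v) \<Rightarrow> ('e \<Rightarrow> 'v) \<Rightarrow> (real^'e) set" where
  "int_flows src tgt = {x \<in> flows src tgt. \<forall>e. x $ e \<in> \<int>}"

definition voronoi :: "('e::finite \<Rightarrow> 'v) \<Rightarrow> ('e \<Rightarrow> 'v) \<Rightarrow> real^'e \<Rightarrow> (real^'e) set" where
  "voronoi src tgt l =
     {x \<in> flows src tgt. \<forall>\<mu>\<in>int_flows src tgt. qf (x - l) \<le> qf (x - \<mu>)}"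

definition supp :: "real^'e \<Rightarrow> ('e \<times> bool) set" where
  "supp x = {d. oval x d > 0}"

definition genus :: "('e \<Rightarrow> 'v) \<Rightarrow> ('e \<Rightarrow> 'v) \<Rightarrow> ('e \<times> bool) set \<Rightarrow> nat" where
  "genus src tgt D =
     (let Es = fst ` D;
          Vs = src ` Es \<union> tgt ` Es;
          R = ({(src e, tgt e) | e. e \<in> Es} \<union> {(tgt e, src e) | e. e \<in> Es})\<^sup>*
      in card Es + card (Vs // R) - card Vs)"

text \<open>Circuit: D is the edge set of a directed cycle (a loop is a circuit of length one).\<close>
definition is_circuit :: "('e \<Rightarrow> 'v) \<Rightarrow> ('e \<Rightarrow> 'v) \<Rightarrow> ('e \<times> bool) set \<Rightarrow> bool" where
  "is_circuit src tgt D \<longleftrightarrow>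
     (\<exists>cs. cs \<noteq> [] \<and> set cs = D \<and> distinct (map fst cs)
        \<and> distinct (map (otail src tgt) cs)
        \<and> (\<forall>i<length cs. ohead src tgt (cs ! i) = otail src tgt (cs ! ((i + 1) mod length cs))))"

definition chain_of :: "('e \<times> bool) set \<Rightarrow> real^'e" where
  "chain_of D = (\<chi> e. if (e, True) \<in> D then 1 else if (e, False) \<in> D then -1 else 0)"

end

theory Submission
  imports Defs
begin

text \<open>
Let x lie in both V_O and V_l, and let m = x^C for a circuit C inside supp(l).
Since l is integral and has the orientation of C on C, m.(l - m) >= 0; comparing the
distances from x to the lattice points O, l, m and l - m then forces the wall equations
m.(l - m) = 0 and 2 x.m = l.m. The chains x^C of such circuits span the
cycle space Z of supp(l), i.e. the flows carried by the edges of supp(l); so V_O \<inter> V_l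
lies in the affine subspace l/2 + (Z-perp \<inter> H), of codimension dim Z in H. By rank--nullity
for the boundary map, dim Z = #edges - #vertices + #components = genus of supp(l).
If the wall is a facet of the full-dimensional cell V_O, then dim Z <= 1, so l is a
positive multiple of x^C for a circuit C in its support; then supp(l) = C and the wall
equation forces l = x^C.
\<close>

subsection \<open>The boundary map\<close>

definition bd :: "('e::finite \<Rightarrow> 'v::finite) \<Rightarrow> ('e \<Rightarrow> 'v) \<Rightarrow> real^'e \<Rightarrow> real^'v" where
  "bd src tgt y =
     (\<chi> v. \<Sum>e\<in>UNIV. y$e * ((if src e = v then 1 else 0) - (if tgt e = v then 1 else 0)))"

definition cob :: "('e::finite \<Rightarrow> 'v::finite) \<Rightarrow> ('e \<Rightarrow> 'v) \<Rightarrow> real^'v \<Rightarrow> real^'e" where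
  "cob src tgt z = (\<chi> e. z$(src e) - z$(tgt e))"

lemma qf_inner: "qf x = x \<bullet> x"
  by (simp add: qf_def inner_vec_def power2_eq_square)

lemma linear_bd: "linear (bd src tgt)"
  by (rule linearI)
    (auto simp: bd_def vec_eq_iff sum.distrib[symmetric] sum_distrib_left intro!: sum.cong;
     simp add: algebra_simps)+

lemma bd_inner: "bd src tgt y \<bullet> z = y \<bullet> cob src tgt z"
proof -
  let ?inc = "\<lambda>e v. (if src e = v then 1 else 0) - (if tgt e = v then 1 else (0::real))"
  have contract: "(\<Sum>v\<in>UNIV. y$e * ?inc e v * z$v) = y$e * (z$(src e) - z$(tgt e))" for e
  proof -
    have "(\<Sum>v\<in>UNIV. y$e * ?inc e v * z$v)
        = (\<Sum>v\<in>UNIV. (if src e = v then y$e * z$v else 0) - (if tgt e = v then y$e * z$v else 0))"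
      by (rule sum.cong) auto
    then show ?thesis by (simp add: sum_subtractf algebra_simps)
  qed
  have "bd src tgt y \<bullet> z = (\<Sum>v\<in>UNIV. \<Sum>e\<in>UNIV. y$e * ?inc e v * z$v)"
    by (simp add: bd_def inner_vec_def sum_distrib_right)
  also have "\<dots> = (\<Sum>e\<in>UNIV. \<Sum>v\<in>UNIV. y$e * ?inc e v * z$v)"
    by (rule sum.swap)
  also have "\<dots> = y \<bullet> cob src tgt z"
    by (simp add: contract cob_def inner_vec_def)
  finally show ?thesis .
qed

lemma is_flow_iff_bd:
  fixes src tgt :: "'e::finite \<Rightarrow> 'v::finite"
  shows "is_flow src tgt y \<longleftrightarrow> bd src tgt y = 0"
proof -
  have "(\<Sum>d\<in>{d. otail src tgt d = v}. oval y d) = bd src tgt y $ v" for v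
  proof -
    have "(\<Sum>d\<in>{d. otail src tgt d = v}. oval y d)
        = (\<Sum>d\<in>UNIV. if otail src tgt d = v then oval y d else 0)"
      by (simp add: sum.If_cases)
    also have "\<dots> = (\<Sum>e\<in>UNIV. \<Sum>b\<in>UNIV. if otail src tgt (e,b) = v then oval y (e,b) else 0)"
      by (simp add: UNIV_Times_UNIV[symmetric] sum.cartesian_product del: UNIV_Times_UNIV)
    also have "\<dots> = bd src tgt y $ v"
      by (auto simp: bd_def UNIV_bool otail_def oval_def intro!: sum.cong)
    finally show ?thesis .
  qed
  then show ?thesis by (simp add: is_flow_def vec_eq_iff)
qed

lemma flows_eq_kernel:
  fixes src tgt :: "'e::finite \<Rightarrow> 'v::finite"
  shows "flows src tgt = {y. bd src tgt y = 0}"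
  by (simp add: flows_def is_flow_iff_bd)

lemma subspace_flows:
  fixes src tgt :: "'e::finite \<Rightarrow> 'v::finite"
  shows "subspace (flows src tgt)"
  unfolding flows_eq_kernel using linear_bd by (rule linear_subspace_kernel)

lemma int_flows_iff:
  fixes src tgt :: "'e::finite \<Rightarrow> 'v::finite"
  shows "l \<in> int_flows src tgt \<longleftrightarrow> bd src tgt l = 0 \<and> (\<forall>e. l$e \<in> \<int>)"
  by (simp add: int_flows_def flows_eq_kernel)

lemma int_flows_diff:
  fixes src tgt :: "'e::finite \<Rightarrow> 'v::finite"
  assumes "a \<in> int_flows src tgt" and "b \<in> int_flows src tgt"
  shows "a - b \<in> int_flows src tgt"
  using assms by (auto simp: int_flows_iff linear_diff[OF linear_bd])

lemma rank_nullity: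
  fixes f :: "'a::euclidean_space \<Rightarrow> 'b::euclidean_space"
  assumes lf: "linear f" and S: "subspace S"
  shows "dim (f ` S) + dim {x\<in>S. f x = 0} = dim S"
proof -
  define N where "N = {x\<in>S. f x = 0}"
  define N' where "N' = {y\<in>S. \<forall>x\<in>N. orthogonal x y}"
  have sN: "subspace N" unfolding N_def
    using subspace_inter[OF S linear_subspace_kernel[OF lf]] by (simp add: Int_def)
  have NS: "N \<subseteq> S" by (auto simp: N_def)
  have dim_split: "dim N' + dim N = dim S"
    unfolding N'_def by (rule dim_subspace_orthogonal_to_vectors[OF sN S NS])
  have sN': "subspace N'" unfolding N'_def
    by (auto simp: subspace_def orthogonal_def inner_add_right S[unfolded subspace_def])
  have same_image: "f ` S = f ` N'"
  proof
    show "f ` N' \<subseteq> f ` S" by (auto simp: N'_def)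
    show "f ` S \<subseteq> f ` N'"
    proof
      fix u assume "u \<in> f ` S"
      then obtain x where x: "x \<in> S" "u = f x" by auto
      obtain p q where p: "p \<in> span N" and q: "\<And>w. w \<in> span N \<Longrightarrow> orthogonal q w"
        and xpq: "x = p + q"
        using orthogonal_subspace_decomp_exists[of N x] by blast
      have pN: "p \<in> N" using p sN by (metis span_eq_iff)
      have qS: "q \<in> S" using xpq x pN NS S by (metis add_diff_cancel_left' subsetD subspace_diff)
      have "q \<in> N'" using qS q span_base by (auto simp: N'_def orthogonal_commute)
      moreover have "f x = f q" using pN xpq linear_add[OF lf] by (auto simp: N_def)
      ultimately show "u \<in> f ` N'" using x by auto
    qed
  qed
  have inj: "inj_on f (span N')"
  proof (rule inj_onI)
    fix a b assume a: "a \<in> span N'" and b: "b \<in> span N'" and ab: "f a = f b"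
    have abN': "a \<in> N'" "b \<in> N'" using a b sN' by (metis span_eq_iff)+
    then have "a - b \<in> N'" using sN' subspace_diff by blast
    moreover have "a - b \<in> N" using abN' ab linear_diff[OF lf] S
      by (auto simp: N_def N'_def subspace_diff)
    ultimately have "orthogonal (a - b) (a - b)" by (auto simp: N'_def)
    then show "a = b" by (simp add: orthogonal_def)
  qed
  have "dim (f ` S) = dim N'" using same_image dim_image_eq[OF lf inj] by simp
  then show ?thesis using dim_split by (simp add: N_def)
qed

lemma subspace_coord: "subspace {x::real^'n::finite. \<forall>i. i \<notin> d \<longrightarrow> x$i = 0}"
  by (auto simp: subspace_def)

lemma dim_coord:
  fixes d :: "'n::finite set"
  shows "dim {x::real^'n. \<forall>i. i \<notin> d \<longrightarrow> x$i = 0} = card d"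
  using dim_substandard_cart[where 'a=real and d=d] unfolding dim_vec_eq .

lemma dim_le_1_multiple:
  fixes W :: "'a::euclidean_space set"
  assumes "dim W \<le> 1" and "m \<in> W" "m \<noteq> 0" and "l \<in> W"
  shows "\<exists>c. l = c *\<^sub>R m"
proof (rule ccontr)
  assume no: "\<not> ?thesis"
  then have "l \<notin> span {m}" by (auto simp: span_singleton)
  moreover have "l \<noteq> m" using no by (metis scaleR_one)
  ultimately have "independent {l, m}" using assms(3) by (simp add: independent_insert)
  then have "card {l, m} \<le> dim W" using assms(2,4) by (intro independent_card_le_dim) auto
  then show False using assms(1) \<open>l \<noteq> m\<close> by simp
qed

lemma orthogonal_slice:
  fixes H W :: "'a::euclidean_space set"
  assumes sH: "subspace H" and sW: "subspace W" and WH: "W \<subseteq> H" and pH: "p \<in> H"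
  defines "A \<equiv> (+) p ` {z\<in>H. \<forall>w\<in>W. orthogonal w z}"
  shows "affine A" and "A \<subseteq> H" and "aff_dim A = int (dim H) - int (dim W)"
proof -
  define U where "U = {z\<in>H. \<forall>w\<in>W. orthogonal w z}"
  have sU: "subspace U" unfolding U_def using sH by (auto simp: subspace_def orthogonal_clauses)
  have dU: "dim U + dim W = dim H"
    unfolding U_def by (rule dim_subspace_orthogonal_to_vectors[OF sW sH WH])
  show "affine A" unfolding A_def U_def[symmetric]
    using affine_translation subspace_imp_affine[OF sU] by blast
  show "A \<subseteq> H" unfolding A_def using sH pH by (auto intro: subspace_add)
  show "aff_dim A = int (dim H) - int (dim W)" unfolding A_def U_def[symmetric]
    using dU by (simp add: aff_dim_translation_eq aff_dim_subspace[OF sU])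
qed

definition ind :: "'v::finite set \<Rightarrow> real^'v" where
  "ind X = (\<chi> v. if v \<in> X then 1 else 0)"

lemma independent_indicators:
  fixes Q :: "'v::finite set set"
  assumes ne: "\<And>X. X \<in> Q \<Longrightarrow> X \<noteq> {}"
    and disj: "\<And>X Y. X \<in> Q \<Longrightarrow> Y \<in> Q \<Longrightarrow> X = Y \<or> X \<inter> Y = {}"
  shows "independent (ind ` Q)" and "card (ind ` Q) = card Q"
proof -
  have ind_inj: "inj ind"
    by (rule injI) (auto simp: ind_def vec_eq_iff, (metis zero_neq_one)+)
  then show "card (ind ` Q) = card Q" by (meson card_image inj_on_subset subset_UNIV)
  have "ind X \<bullet> ind Y = 0" if "X \<inter> Y = {}" for X Y :: "'v set"
    using that by (auto simp: ind_def inner_vec_def intro!: sum.neutral)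
  then have "pairwise orthogonal (ind ` Q)"
    unfolding pairwise_def orthogonal_def using disj by (metis imageE)
  moreover have "0 \<notin> ind ` Q"
  proof
    assume "0 \<in> ind ` Q"
    then obtain X v where "X \<in> Q" "ind X = 0" "v \<in> X" using ne by (metis all_not_in_conv imageE)
    then have "ind X $ v = 0" by simp
    moreover have "ind X $ v = 1" using \<open>v \<in> X\<close> by (simp add: ind_def)
    ultimately show False by simp
  qed
  ultimately show "independent (ind ` Q)" by (rule pairwise_orthogonal_independent)
qed

definition class_constant :: "'v rel \<Rightarrow> 'v set \<Rightarrow> (real^'v::finite) set" where
  "class_constant R Vs = {z. (\<forall>v. v \<notin> Vs \<longrightarrow> z$v = 0) \<and> (\<forall>u w. (u, w) \<in> R \<longrightarrow> z$u = z$w)}"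

lemma quotient_class_props:
  assumes eqR: "equiv UNIV R" and closed: "R `` Vs \<subseteq> Vs"
    and X: "X \<in> Vs // R"
  shows "X \<subseteq> Vs" and "X \<noteq> {}" and "\<And>Y. Y \<in> Vs // R \<Longrightarrow> X = Y \<or> X \<inter> Y = {}"
proof -
  show "X \<subseteq> Vs" "X \<noteq> {}" using X closed eqR by (auto simp: quotient_def equiv_def refl_on_def)
  have in_UNIV: "Y \<in> UNIV // R" if "Y \<in> Vs // R" for Y using that by (auto simp: quotient_def)
  show "X = Y \<or> X \<inter> Y = {}" if "Y \<in> Vs // R" for Y
    using quotient_disj[OF eqR in_UNIV[OF X] in_UNIV[OF that]] .
qed

lemma class_constant_expansion:
  fixes R :: "'v::finite rel"
  assumes eqR: "equiv UNIV R" and closed: "R `` Vs \<subseteq> Vs"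
    and z: "z \<in> class_constant R Vs"
  shows "z = (\<Sum>X\<in>Vs // R. z$(SOME v. v \<in> X) *\<^sub>R ind X)"
proof (subst vec_eq_iff, rule allI)
  fix u
  note Q = quotient_class_props[OF eqR closed]
  show "z$u = (\<Sum>X\<in>Vs // R. z$(SOME v. v \<in> X) *\<^sub>R ind X) $ u"
  proof (cases "u \<in> Vs")
    case False
    then have "(\<Sum>X\<in>Vs // R. z$(SOME v. v \<in> X) *\<^sub>R ind X) $ u = 0"
      using Q(1) by (auto simp: ind_def intro!: sum.neutral) blast
    then show ?thesis using False z by (simp add: class_constant_def)
  next
    case True
    define X0 where "X0 = R``{u}"
    have X0Q: "X0 \<in> Vs // R" using True by (auto simp: X0_def quotient_def)
    have uX0: "u \<in> X0" using eqR by (auto simp: X0_def equiv_def refl_on_def)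
    have "z $ (SOME v. v \<in> X) * ind X $ u = (if X = X0 then z $ (SOME v. v \<in> X) else 0)"
      if "X \<in> Vs // R" for X
      using Q(3)[OF that X0Q] uX0 by (auto simp: ind_def)
    then have "(\<Sum>X\<in>Vs // R. z$(SOME v. v \<in> X) *\<^sub>R ind X) $ u = z$(SOME v. v \<in> X0)"
      using X0Q by simp
    also have "\<dots> = z$u"
      using someI[of "\<lambda>v. v \<in> X0", OF uX0] z by (auto simp: X0_def class_constant_def)
    finally show ?thesis by simp
  qed
qed

lemma dim_class_constant:
  fixes R :: "'v::finite rel"
  assumes eqR: "equiv UNIV R" and closed: "R `` Vs \<subseteq> Vs"
  shows "dim (class_constant R Vs) = card (Vs // R)"
proof -
  note Q = quotient_class_props[OF eqR closed]
  note indep = independent_indicators[of "Vs // R", OF Q(2) Q(3)]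
  have indK: "ind X \<in> class_constant R Vs" if X: "X \<in> Vs // R" for X
  proof -
    obtain x where x: "X = R``{x}" using X by (auto simp: quotient_def)
    have "u \<in> X \<longleftrightarrow> w \<in> X" if "(u, w) \<in> R" for u w
      using that eqR unfolding x equiv_def by (meson ImageI Image_singleton_iff symD transD)
    then show ?thesis using Q(1)[OF X] by (auto simp: class_constant_def ind_def)
  qed
  have spanK: "z \<in> span (ind ` (Vs // R))" if "z \<in> class_constant R Vs" for z
    by (subst class_constant_expansion[OF eqR closed that]) (intro span_sum span_scale span_base imageI)
  have "subspace (class_constant R Vs)" by (auto simp: class_constant_def subspace_def)
  then have "span (ind ` (Vs // R)) = class_constant R Vs"
    using indK spanK span_minimal by blast
  then show ?thesis using dim_span_eq_card_independent[OF indep(1)] indep(2) by simp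
qed

lemma constant_along_rtrancl:
  assumes "(u, w) \<in> (G \<union> G\<inverse>)\<^sup>*" and "\<forall>(a,b)\<in>G. f a = f b"
  shows "f u = f w"
  using assms(1) by (induction rule: rtrancl_induct) (use assms(2) in auto)

lemma dim_locally_constant:
  fixes src tgt :: "'e::finite \<Rightarrow> 'v::finite" and Es :: "'e set"
  defines "Vs \<equiv> src ` Es \<union> tgt ` Es"
  defines "R \<equiv> ({(src e, tgt e) | e. e \<in> Es} \<union> {(tgt e, src e) | e. e \<in> Es})\<^sup>*"
  shows "dim {z::real^'v. (\<forall>v. v \<notin> Vs \<longrightarrow> z$v = 0) \<and> (\<forall>e\<in>Es. z$(src e) = z$(tgt e))}
           = card (Vs // R)"
proof -
  define G where "G = {(src e, tgt e) | e. e \<in> Es}"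
  have "{(tgt e, src e) | e. e \<in> Es} = G\<inverse>" by (auto simp: G_def)
  then have RG: "R = (G \<union> G\<inverse>)\<^sup>*" by (simp add: R_def G_def)
  have eqR: "equiv UNIV R" unfolding RG
  proof (rule equivI)
    show "sym ((G \<union> G\<inverse>)\<^sup>*)" by (rule sym_rtrancl) (simp add: sym_Un_converse)
  qed (auto simp: refl_rtrancl trans_rtrancl)
  have "w \<in> Vs" if "(u, w) \<in> R" "u \<in> Vs" for u w
    using that(1) unfolding RG
    by (induction rule: rtrancl_induct) (use that(2) in \<open>auto simp: G_def Vs_def\<close>)
  then have closed: "R `` Vs \<subseteq> Vs" by blast
  have "(\<forall>e\<in>Es. z$(src e) = z$(tgt e)) \<longleftrightarrow> (\<forall>u w. (u, w) \<in> R \<longrightarrow> z$u = z$w)" for z :: "real^'v"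
  proof
    assume "\<forall>e\<in>Es. z$(src e) = z$(tgt e)"
    then show "\<forall>u w. (u, w) \<in> R \<longrightarrow> z$u = z$w"
      using constant_along_rtrancl[of _ _ G "\<lambda>v. z$v"] by (auto simp: RG G_def)
  next
    assume "\<forall>u w. (u, w) \<in> R \<longrightarrow> z$u = z$w"
    moreover have "(src e, tgt e) \<in> R" if "e \<in> Es" for e
      using that unfolding R_def by blast
    ultimately show "\<forall>e\<in>Es. z$(src e) = z$(tgt e)" by blast
  qed
  then show ?thesis using dim_class_constant[OF eqR closed] by (simp add: class_constant_def)
qed

subsection \<open>The cycle space of a subgraph and its dimension\<close>

definition cycle_space :: "('e::finite \<Rightarrow> 'v::finite) \<Rightarrow> ('e \<Rightarrow> 'v) \<Rightarrow> 'e set \<Rightarrow> (real^'e) set" where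
  "cycle_space src tgt Es = {y. bd src tgt y = 0 \<and> (\<forall>e. e \<notin> Es \<longrightarrow> y$e = 0)}"

lemma subspace_cycle_space: "subspace (cycle_space src tgt Es)"
  unfolding cycle_space_def
  by (auto simp: subspace_def linear_add[OF linear_bd] linear_cmul[OF linear_bd] linear_0[OF linear_bd])

lemma cycle_space_subset_flows:
  fixes src tgt :: "'e::finite \<Rightarrow> 'v::finite"
  shows "cycle_space src tgt Es \<subseteq> flows src tgt"
  by (auto simp: cycle_space_def flows_eq_kernel)

lemma boundary_image_orthogonal:
  fixes src tgt :: "'e::finite \<Rightarrow> 'v::finite" and Es :: "'e set"
  defines "S \<equiv> {y::real^'e. \<forall>e. e \<notin> Es \<longrightarrow> y$e = 0}"
    and "T \<equiv> {z::real^'v. \<forall>v. v \<notin> src ` Es \<union> tgt ` Es \<longrightarrow> z$v = 0}"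
  shows "{z\<in>T. \<forall>x\<in>bd src tgt ` S. orthogonal x z}
       = {z\<in>T. \<forall>e\<in>Es. z$(src e) = z$(tgt e)}"
proof -
  have "(\<forall>x\<in>bd src tgt ` S. orthogonal x z) \<longleftrightarrow> (\<forall>y\<in>S. y \<bullet> cob src tgt z = 0)" for z
    by (simp add: orthogonal_def bd_inner)
  moreover have "(\<forall>y\<in>S. y \<bullet> cob src tgt z = 0) \<longleftrightarrow> (\<forall>e\<in>Es. z$(src e) = z$(tgt e))" for z
  proof
    assume orth: "\<forall>y\<in>S. y \<bullet> cob src tgt z = 0"
    show "\<forall>e\<in>Es. z$(src e) = z$(tgt e)"
    proof
      fix e assume "e \<in> Es"
      then have "axis e 1 \<in> S" by (auto simp: S_def axis_def)
      then have "axis e (1::real) \<bullet> cob src tgt z = 0" using orth by blast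
      then have "cob src tgt z $ e = 0"
        using cart_eq_inner_axis[of "cob src tgt z" e] by (simp add: inner_commute)
      then show "z$(src e) = z$(tgt e)" by (simp add: cob_def)
    qed
  next
    assume "\<forall>e\<in>Es. z$(src e) = z$(tgt e)"
    then have "y$e * cob src tgt z $ e = 0" if "y \<in> S" for y e
      using that by (cases "e \<in> Es") (auto simp: S_def cob_def)
    then show "\<forall>y\<in>S. y \<bullet> cob src tgt z = 0" by (auto simp: inner_vec_def intro!: sum.neutral)
  qed
  ultimately show ?thesis by auto
qed

text \<open>Rank--nullity for the boundary map restricted to chains on Es:
the cycle space has dimension #edges - #vertices + #components.\<close>

lemma dim_cycle_space:
  fixes src tgt :: "'e::finite \<Rightarrow> 'v::finite" and Es :: "'e set"
  defines "Vs \<equiv> src ` Es \<union> tgt ` Es"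
  defines "R \<equiv> ({(src e, tgt e) | e. e \<in> Es} \<union> {(tgt e, src e) | e. e \<in> Es})\<^sup>*"
  shows "dim (cycle_space src tgt Es) = card Es + card (Vs // R) - card Vs"
proof -
  define S where "S = {y::real^'e. \<forall>e. e \<notin> Es \<longrightarrow> y$e = 0}"
  define T where "T = {z::real^'v. \<forall>v. v \<notin> Vs \<longrightarrow> z$v = 0}"
  define I where "I = bd src tgt ` S"
  have sS: "subspace S" unfolding S_def by (rule subspace_coord)
  have sT: "subspace T" unfolding T_def by (rule subspace_coord)
  have sI: "subspace I" unfolding I_def by (rule linear_subspace_image[OF linear_bd sS])
  have IT: "I \<subseteq> T"
  proof
    fix x assume "x \<in> I"
    then obtain y where y: "y \<in> S" "x = bd src tgt y" by (auto simp: I_def)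
    have "y$e * ((if src e = v then 1 else 0) - (if tgt e = v then 1 else 0)) = 0" if "v \<notin> Vs" for e v
      using y(1) that by (cases "e \<in> Es") (auto simp: S_def Vs_def)
    then show "x \<in> T" using y(2) by (auto simp: T_def bd_def intro!: sum.neutral)
  qed
  have "dim I + dim (cycle_space src tgt Es) = card Es"
    using rank_nullity[OF linear_bd sS] dim_coord[of Es]
    by (simp add: I_def S_def cycle_space_def conj_commute)
  moreover have "dim {z\<in>T. \<forall>x\<in>I. orthogonal x z} + dim I = card Vs"
    using dim_subspace_orthogonal_to_vectors[OF sI sT IT] dim_coord[of Vs] by (simp add: T_def)
  moreover have "dim {z\<in>T. \<forall>x\<in>I. orthogonal x z} = card (Vs // R)"
    using boundary_image_orthogonal[where src=src and tgt=tgt and Es=Es]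
      dim_locally_constant[where src=src and tgt=tgt and Es=Es]
    by (simp add: I_def S_def T_def Vs_def R_def conj_commute)
  ultimately show ?thesis by linarith
qed

lemma genus_eq_dim_cycle_space:
  fixes src tgt :: "'e::finite \<Rightarrow> 'v::finite"
  shows "genus src tgt D = dim (cycle_space src tgt (fst ` D))"
  unfolding genus_def Let_def by (rule dim_cycle_space[symmetric])

definition circ :: "('e \<Rightarrow> 'v) \<Rightarrow> ('e \<Rightarrow> 'v) \<Rightarrow> ('e \<times> bool) list \<Rightarrow> bool" where
  "circ src tgt cs \<longleftrightarrow> cs \<noteq> [] \<and> distinct (map fst cs)
        \<and> distinct (map (otail src tgt) cs)
        \<and> (\<forall>i<length cs. ohead src tgt (cs ! i) = otail src tgt (cs ! ((i + 1) mod length cs)))"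

lemma is_circuit_iff_circ: "is_circuit src tgt D \<longleftrightarrow> (\<exists>cs. circ src tgt cs \<and> set cs = D)"
  unfolding is_circuit_def circ_def by blast

lemma circ_inj_fst: "circ src tgt cs \<Longrightarrow> inj_on fst (set cs)"
  by (simp add: circ_def distinct_map)

definition cvec :: "'e::finite \<times> bool \<Rightarrow> real^'e" where
  "cvec d = (\<chi> e. if e = fst d then (if snd d then 1 else -1) else 0)"

lemma chain_of_sum:
  fixes D :: "('e::finite \<times> bool) set"
  assumes "inj_on fst D"
  shows "chain_of D = (\<Sum>d\<in>D. cvec d)"
proof (subst vec_eq_iff, rule allI)
  fix e
  have not_both: "\<not> ((e,True) \<in> D \<and> (e,False) \<in> D)" using assms by (force simp: inj_on_def)
  have "cvec d $ e = (if d = (e,True) then 1 else 0) - (if d = (e,False) then 1 else 0)" for d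
    by (cases d) (auto simp: cvec_def)
  then have "(\<Sum>d\<in>D. cvec d) $ e = (if (e,True) \<in> D then 1 else 0) - (if (e,False) \<in> D then 1 else 0)"
    by (simp add: sum_subtractf)
  then show "chain_of D $ e = (\<Sum>d\<in>D. cvec d) $ e"
    using not_both by (auto simp: chain_of_def)
qed

lemma bd_cvec:
  fixes src tgt :: "'e::finite \<Rightarrow> 'v::finite"
  shows "bd src tgt (cvec d) $ v
       = (if otail src tgt d = v then 1 else 0) - (if ohead src tgt d = v then 1 else 0)"
proof -
  have "bd src tgt (cvec d) $ v = (\<Sum>e\<in>UNIV. if e = fst d then (if snd d then 1 else -1) *
          ((if src e = v then 1 else 0) - (if tgt e = v then 1 else 0)) else 0)"
    unfolding bd_def cvec_def vec_lambda_beta by (intro sum.cong) simp_all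
  then show ?thesis by (auto simp: otail_def ohead_def)
qed

lemma sum_rotate:
  fixes f :: "nat \<Rightarrow> 'a::comm_monoid_add"
  assumes "n > 0"
  shows "(\<Sum>i<n. f ((i + 1) mod n)) = (\<Sum>i<n. f i)"
proof (rule sum.reindex_bij_witness[where i = "\<lambda>i. (i + n - 1) mod n" and j = "\<lambda>i. (i + 1) mod n"])
  fix a assume a: "a \<in> {..<n}"
  show "(a + n - 1) mod n \<in> {..<n}" using assms by simp
  show "((a + n - 1) mod n + 1) mod n = a"
    using a assms by (cases a) (auto simp: mod_Suc)
  show "(a + 1) mod n \<in> {..<n}" using assms by simp
  show "((a + 1) mod n + n - 1) mod n = a"
    using a assms by (auto simp: mod_Suc)
qed simp

text \<open>The chain of a circuit is a flow: every vertex is entered as often as it is left.\<close>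

lemma circ_flow:
  fixes src tgt :: "'e::finite \<Rightarrow> 'v::finite"
  assumes "circ src tgt cs"
  shows "bd src tgt (chain_of (set cs)) = 0"
proof -
  define n where "n = length cs"
  have n: "n > 0" using assms by (auto simp: circ_def n_def)
  have dcs: "distinct cs" using assms by (simp add: circ_def distinct_map)
  have "chain_of (set cs) = (\<Sum>d\<in>set cs. cvec d)" by (rule chain_of_sum[OF circ_inj_fst[OF assms]])
  also have "\<dots> = (\<Sum>i<n. cvec (cs!i))"
  proof -
    have "set cs = (!) cs ` {..<n}" by (auto simp: n_def set_conv_nth)
    moreover have "inj_on ((!) cs) {..<n}" using dcs by (auto simp: n_def inj_on_def nth_eq_iff_index_eq)
    ultimately show ?thesis by (simp add: sum.reindex)
  qed
  finally have "bd src tgt (chain_of (set cs)) = (\<Sum>i<n. bd src tgt (cvec (cs!i)))"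
    by (simp add: linear_sum[OF linear_bd])
  also have "\<dots> = 0"
  proof (subst vec_eq_iff, rule allI)
    fix v
    let ?out = "\<lambda>i. if otail src tgt (cs!i) = v then 1 else (0::real)"
    have "(\<Sum>i<n. if ohead src tgt (cs!i) = v then 1 else (0::real)) = (\<Sum>i<n. ?out ((i + 1) mod n))"
      using assms by (auto simp: circ_def n_def intro!: sum.cong)
    also have "\<dots> = (\<Sum>i<n. ?out i)" by (rule sum_rotate[OF n])
    finally show "(\<Sum>i<n. bd src tgt (cvec (cs!i))) $ v = 0 $ v"
      by (simp add: bd_cvec sum_subtractf)
  qed
  finally show ?thesis .
qed

lemma circ_int_flow:
  fixes src tgt :: "'e::finite \<Rightarrow> 'v::finite"
  shows "circ src tgt cs \<Longrightarrow> chain_of (set cs) \<in> int_flows src tgt"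
  using circ_flow[of src tgt cs] by (auto simp: int_flows_iff chain_of_def)

lemma oval_chain_of:
  assumes "inj_on fst C"
  shows "oval (chain_of C) d = (if d \<in> C then 1 else if (fst d, \<not> snd d) \<in> C then -1 else 0)"
proof -
  obtain e b where d: "d = (e,b)" by (cases d)
  have "\<not> ((e,True) \<in> C \<and> (e,False) \<in> C)" using assms by (force simp: inj_on_def)
  then show ?thesis by (cases b) (auto simp: d oval_def chain_of_def)
qed

subsection \<open>Every nonzero flow contains a circuit in its support\<close>

lemma supp_inj_fst: "inj_on fst (supp y)"
  by (rule inj_onI) (auto simp: supp_def oval_def split: if_splits)

lemma fst_supp: "fst ` supp l = {e. l$e \<noteq> 0}"
proof (rule set_eqI, rule iffI)
  fix e assume "e \<in> fst ` supp l"
  then show "e \<in> {e. l$e \<noteq> 0}" by (auto simp: supp_def oval_def split: if_splits)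
next
  fix e assume e: "e \<in> {e. l$e \<noteq> 0}"
  then have "(e, l$e > 0) \<in> supp l" by (auto simp: supp_def oval_def)
  then show "e \<in> fst ` supp l" by force
qed

lemma flow_continues:
  fixes src tgt :: "'e::finite \<Rightarrow> 'v::finite"
  assumes fl: "bd src tgt y = 0" and d: "d \<in> supp y"
  shows "\<exists>d'\<in>supp y. otail src tgt d' = ohead src tgt d"
proof (rule ccontr)
  assume no: "\<not> ?thesis"
  define v where "v = ohead src tgt d"
  let ?Out = "{d. otail src tgt d = v}"
  have rev_out: "(fst d, \<not> snd d) \<in> ?Out" by (auto simp: v_def otail_def ohead_def)
  have rev_neg: "oval y (fst d, \<not> snd d) < 0" using d by (auto simp: supp_def oval_def)
  have "\<forall>x\<in>?Out. oval y x \<le> 0" using no by (auto simp: supp_def v_def not_less)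
  then have "(\<Sum>x\<in>?Out. oval y x) < (\<Sum>x\<in>?Out. 0)"
    using rev_out rev_neg by (intro sum_strict_mono_ex1) auto
  moreover have "is_flow src tgt y" using fl by (simp add: is_flow_iff_bd)
  ultimately show False by (simp add: is_flow_def)
qed

lemma first_repetition:
  fixes f :: "nat \<Rightarrow> 'a::finite"
  shows "\<exists>i j. i < j \<and> f i = f j \<and> inj_on f {..<j}"
proof -
  define P where "P j = (\<exists>i<j. f i = f j)" for j
  have "\<not> inj_on f {..CARD('a)}"
  proof
    assume "inj_on f {..CARD('a)}"
    then have "card (f ` {..CARD('a)}) = Suc CARD('a)" by (simp add: card_image)
    moreover have "card (f ` {..CARD('a)}) \<le> CARD('a)" by (rule card_mono) auto
    ultimately show False by simp
  qed
  then obtain a b where ab: "a \<noteq> b" "f a = f b" by (auto simp: inj_on_def)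
  have P_max: "P (max a b)" if "a \<noteq> b" "f a = f b" for a b
  proof (cases "a < b")
    case True
    then show ?thesis using that unfolding P_def by (intro exI[of _ a]) (simp add: max_def)
  next
    case False
    then have "b < a" using that(1) by simp
    then show ?thesis using that unfolding P_def by (intro exI[of _ b]) (simp add: max_def)
  qed
  define j where "j = (LEAST j. P j)"
  obtain i where "i < j" "f i = f j" using LeastI[of P, OF P_max[OF ab]] by (auto simp: P_def j_def)
  moreover have "inj_on f {..<j}"
  proof (rule inj_onI, rule ccontr)
    fix a b assume ab: "a \<in> {..<j}" "b \<in> {..<j}" "f a = f b" "a \<noteq> b"
    then show False using not_less_Least[of "max a b" P] P_max[OF ab(4,3)] ab by (simp add: j_def)
  qed
  ultimately show ?thesis by blast
qed

text \<open>If from every oriented edge of S one can continue inside S, walking along S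
eventually closes up, and the first closed stretch of the walk is a circuit in S.\<close>

lemma circuit_in_closed_set:
  fixes src tgt :: "'e::finite \<Rightarrow> 'v::finite"
  assumes d0: "d0 \<in> S" and inj: "inj_on fst S"
    and continue: "\<And>d. d \<in> S \<Longrightarrow> \<exists>d'\<in>S. otail src tgt d' = ohead src tgt d"
  shows "\<exists>cs. circ src tgt cs \<and> set cs \<subseteq> S"
proof -
  obtain nx where nx: "\<And>d. d \<in> S \<Longrightarrow> nx d \<in> S \<and> otail src tgt (nx d) = ohead src tgt d"
    using continue by metis
  define w where "w k = (nx ^^ k) d0" for k
  have wS: "w k \<in> S" for k by (induction k) (auto simp: w_def d0 nx)
  have wstep: "otail src tgt (w (Suc k)) = ohead src tgt (w k)" for k
    using nx wS by (simp add: w_def)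
  obtain i j where ij: "i < j" "otail src tgt (w i) = otail src tgt (w j)"
    and first: "inj_on (\<lambda>k. otail src tgt (w k)) {..<j}"
    using first_repetition[of "\<lambda>k. otail src tgt (w k)"] by blast
  define cs where "cs = map w [i..<j]"
  have lcs: "length cs = j - i" and csn: "\<And>k. k < j - i \<Longrightarrow> cs ! k = w (i + k)"
    by (simp_all add: cs_def)
  have setcs: "set cs \<subseteq> S" using wS by (auto simp: cs_def)
  have "inj_on (\<lambda>k. otail src tgt (w k)) {i..<j}" using first by (rule inj_on_subset) auto
  then have dtl: "distinct (map (otail src tgt) cs)" by (simp add: cs_def distinct_map comp_def)
  then have "distinct cs" by (simp add: distinct_map)
  then have dfst: "distinct (map fst cs)" using inj_on_subset[OF inj setcs] by (simp add: distinct_map)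
  have closes: "ohead src tgt (cs ! k) = otail src tgt (cs ! ((k + 1) mod length cs))"
    if k: "k < length cs" for k
  proof (cases "k + 1 < length cs")
    case True
    then show ?thesis using k lcs csn wstep[of "i+k"] by simp
  next
    case False
    then have "k + 1 = j - i" using k lcs by simp
    then have "Suc (i + k) = j" "(k + 1) mod length cs = 0" using ij lcs by auto
    then show ?thesis using k lcs csn[of 0] csn[of k] wstep[of "i+k"] ij by simp
  qed
  have "circ src tgt cs" unfolding circ_def using ij lcs dfst dtl closes by auto
  then show ?thesis using setcs by blast
qed

lemma circuit_exists:
  fixes src tgt :: "'e::finite \<Rightarrow> 'v::finite"
  assumes fl: "bd src tgt y = 0" and nz: "y \<noteq> 0"
  shows "\<exists>cs. circ src tgt cs \<and> set cs \<subseteq> supp y"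
proof -
  obtain e where "y$e \<noteq> 0" using nz by (auto simp: vec_eq_iff)
  then have "e \<in> fst ` supp y" by (simp add: fst_supp)
  then obtain d0 where "d0 \<in> supp y" by blast
  then show ?thesis by (rule circuit_in_closed_set[OF _ supp_inj_fst flow_continues[OF fl]])
qed

subsection \<open>Flows are spanned by the circuits in their support\<close>

definition circuit_chains :: "('e::finite \<Rightarrow> 'v) \<Rightarrow> ('e \<Rightarrow> 'v) \<Rightarrow> ('e \<times> bool) set \<Rightarrow> (real^'e) set" where
  "circuit_chains src tgt D = {chain_of (set cs) | cs. circ src tgt cs \<and> set cs \<subseteq> D}"

lemma oval_zero_iff: "oval x d = 0 \<longleftrightarrow> x $ fst d = 0"
  by (simp add: oval_def)

lemma oval_diff_scaled: "oval (a - c *\<^sub>R b) d = oval a d - c * oval b d"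
  by (simp add: oval_def)

lemma supp_subtract_chain:
  assumes injC: "inj_on fst C" and C: "C \<subseteq> supp y" and t_le: "\<And>d. d \<in> C \<Longrightarrow> t \<le> oval y d"
  shows "supp (y - t *\<^sub>R chain_of C) \<subseteq> supp y"
proof
  fix d assume d: "d \<in> supp (y - t *\<^sub>R chain_of C)"
  have ov: "oval (y - t *\<^sub>R chain_of C) d
      = oval y d - t * (if d \<in> C then 1 else if (fst d, \<not> snd d) \<in> C then -1 else 0)"
    by (simp add: oval_diff_scaled oval_chain_of[OF injC])
  consider "d \<in> C" | "d \<notin> C" "(fst d, \<not> snd d) \<in> C" | "d \<notin> C" "(fst d, \<not> snd d) \<notin> C" by blast
  then show "d \<in> supp y"
  proof cases
    case 1 then show ?thesis using C by blast
  next
    case 2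
    then have "oval y d = - oval y (fst d, \<not> snd d)" by (simp add: oval_def)
    then show ?thesis using d ov t_le[OF 2(2)] 2 by (simp add: supp_def)
  next
    case 3 then show ?thesis using d ov by (simp add: supp_def)
  qed
qed

text \<open>Subtracting from a flow the largest such multiple of a circuit in its support yields
a flow with smaller support: the edges where the minimum is attained drop out.\<close>

lemma cancel_circuit:
  fixes src tgt :: "'e::finite \<Rightarrow> 'v::finite"
  assumes fl: "bd src tgt y = 0" and cs: "circ src tgt cs" "set cs \<subseteq> supp y"
  obtains t y' where "y = y' + t *\<^sub>R chain_of (set cs)" and "bd src tgt y' = 0"
    and "supp y' \<subseteq> supp y" and "card {e. y'$e \<noteq> 0} < card {e. y$e \<noteq> 0}"
proof -
  define C where "C = set cs"
  have Cne: "C \<noteq> {}" and injC: "inj_on fst C"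
    using cs circ_inj_fst by (auto simp: circ_def C_def)
  define t where "t = Min (oval y ` C)"
  obtain d0 where d0: "d0 \<in> C" "oval y d0 = t"
  proof -
    have "t \<in> oval y ` C" unfolding t_def using Cne by (intro Min_in) (auto simp: C_def)
    then show ?thesis using that by blast
  qed
  define y' where "y' = y - t *\<^sub>R chain_of C"
  have fl': "bd src tgt y' = 0"
    using fl circ_flow[OF cs(1)] by (simp add: y'_def C_def linear_diff[OF linear_bd] linear_cmul[OF linear_bd])
  have supp': "supp y' \<subseteq> supp y"
    unfolding y'_def using injC cs(2) by (intro supp_subtract_chain) (auto simp: t_def C_def)
  have "{e. y'$e \<noteq> 0} \<subseteq> {e. y$e \<noteq> 0}"
    using image_mono[OF supp', of fst] by (simp add: fst_supp)
  moreover have "fst d0 \<in> {e. y$e \<noteq> 0} - {e. y'$e \<noteq> 0}"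
  proof -
    have "oval y' d0 = 0" using d0 by (simp add: y'_def oval_diff_scaled oval_chain_of[OF injC])
    moreover have "oval y d0 \<noteq> 0" using d0 cs(2) by (auto simp: C_def supp_def)
    ultimately show ?thesis by (simp add: oval_zero_iff)
  qed
  ultimately have "{e. y'$e \<noteq> 0} \<subset> {e. y$e \<noteq> 0}" by blast
  then have "card {e. y'$e \<noteq> 0} < card {e. y$e \<noteq> 0}" by (simp add: psubset_card_mono)
  then show ?thesis using that[of y' t] fl' supp' by (simp add: y'_def C_def)
qed

lemma flow_in_span_circuits:
  fixes src tgt :: "'e::finite \<Rightarrow> 'v::finite"
  assumes "bd src tgt y = 0"
  shows "y \<in> span (circuit_chains src tgt (supp y))"
  using assms
proof (induction "card {e. y$e \<noteq> 0}" arbitrary: y rule: less_induct)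
  case less
  show ?case
  proof (cases "y = 0")
    case True then show ?thesis by (simp add: span_zero)
  next
    case False
    obtain cs where cs: "circ src tgt cs" "set cs \<subseteq> supp y"
      using circuit_exists[OF less.prems False] by blast
    obtain t y' where y: "y = y' + t *\<^sub>R chain_of (set cs)" and fl': "bd src tgt y' = 0"
      and supp': "supp y' \<subseteq> supp y" and smaller: "card {e. y'$e \<noteq> 0} < card {e. y$e \<noteq> 0}"
      using cancel_circuit[OF less.prems cs] .
    have mono: "span (circuit_chains src tgt (supp y')) \<subseteq> span (circuit_chains src tgt (supp y))"
      using supp' by (intro span_mono) (auto simp: circuit_chains_def)
    have "y' \<in> span (circuit_chains src tgt (supp y))"
      using less.hyps[OF smaller fl'] mono by blast
    moreover have "chain_of (set cs) \<in> span (circuit_chains src tgt (supp y))"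
      using cs by (intro span_base) (auto simp: circuit_chains_def)
    ultimately show ?thesis unfolding y by (intro span_add span_scale)
  qed
qed

lemma supp_small_perturbation:
  assumes lint: "\<forall>e. l$e \<in> \<int>" and w: "\<forall>e. l$e = 0 \<longrightarrow> w$e = 0" and small: "\<forall>e. \<bar>w$e\<bar> < 1"
  shows "supp (l + w) = supp l"
proof (rule set_eqI)
  fix d
  have ov: "oval (l + w) d = oval l d + oval w d" and sm: "\<bar>oval w d\<bar> < 1"
    using small by (simp_all add: oval_def)
  show "d \<in> supp (l + w) \<longleftrightarrow> d \<in> supp l"
  proof (cases "l $ fst d = 0")
    case True
    then show ?thesis using w ov by (simp add: supp_def oval_def)
  next
    case False
    have "oval l d \<in> \<int>" "oval l d \<noteq> 0" using lint False by (simp_all add: oval_def)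
    then have "\<bar>oval l d\<bar> \<ge> 1" by (metis Ints_nonzero_abs_ge1)
    then show ?thesis using ov sm by (auto simp: supp_def)
  qed
qed

text \<open>For an integer flow l, the flows supported on the edges of supp l are spanned by
the circuits of supp l: perturb l in the direction of such a flow without changing its
support and decompose both.\<close>

lemma cycle_space_in_span_circuits:
  fixes src tgt :: "'e::finite \<Rightarrow> 'v::finite"
  assumes l: "l \<in> int_flows src tgt" and w: "w \<in> cycle_space src tgt (fst ` supp l)"
  shows "w \<in> span (circuit_chains src tgt (supp l))"
proof -
  have lfl: "bd src tgt l = 0" and lint: "\<forall>e. l$e \<in> \<int>" using l by (auto simp: int_flows_iff)
  have wfl: "bd src tgt w = 0" and w_on: "\<forall>e. l$e = 0 \<longrightarrow> w$e = 0"
    using w by (auto simp: cycle_space_def fst_supp)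
  define \<epsilon> where "\<epsilon> = 1 / (1 + (\<Sum>e\<in>UNIV. \<bar>w$e\<bar>))"
  have \<epsilon>pos: "\<epsilon> > 0" by (simp add: \<epsilon>_def sum_nonneg add_pos_nonneg)
  have small: "\<forall>e. \<bar>(\<epsilon> *\<^sub>R w)$e\<bar> < 1"
  proof
    fix e
    have "\<bar>w$e\<bar> < 1 + (\<Sum>e\<in>UNIV. \<bar>w$e\<bar>)" using member_le_sum[of e UNIV "\<lambda>e. \<bar>w$e\<bar>"] by simp
    then show "\<bar>(\<epsilon> *\<^sub>R w)$e\<bar> < 1"
      using \<epsilon>pos by (simp add: \<epsilon>_def abs_mult field_simps sum_nonneg add_pos_nonneg)
  qed
  have supp_eq: "supp (l + \<epsilon> *\<^sub>R w) = supp l"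
    using supp_small_perturbation[OF lint _ small] w_on by simp
  have "bd src tgt (l + \<epsilon> *\<^sub>R w) = 0"
    using lfl wfl by (simp add: linear_add[OF linear_bd] linear_cmul[OF linear_bd])
  then have "l + \<epsilon> *\<^sub>R w \<in> span (circuit_chains src tgt (supp l))"
    using flow_in_span_circuits supp_eq by metis
  moreover have "l \<in> span (circuit_chains src tgt (supp l))" by (rule flow_in_span_circuits[OF lfl])
  ultimately have "(1/\<epsilon>) *\<^sub>R ((l + \<epsilon> *\<^sub>R w) - l) \<in> span (circuit_chains src tgt (supp l))"
    by (intro span_scale span_diff)
  then show ?thesis using \<epsilon>pos by simp
qed

subsection \<open>The wall between the Voronoi cells of O and of l\<close>

text \<open>A circuit chain c inside the support of an integer chain l satisfies c.(l - c) >= 0,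
since l has absolute value at least one, with the orientation of c, on every edge of c.\<close>

lemma circuit_chain_inner_nonneg:
  assumes lint: "\<forall>e. l$e \<in> \<int>" and inj: "inj_on fst C" and C: "C \<subseteq> supp l"
  shows "chain_of C \<bullet> (l - chain_of C) \<ge> 0"
  unfolding inner_vec_def
proof (rule sum_nonneg)
  fix e
  let ?c = "chain_of C"
  have not_both: "\<not> ((e,True) \<in> C \<and> (e,False) \<in> C)" using inj by (force simp: inj_on_def)
  consider "(e,True) \<in> C" | "(e,False) \<in> C" | "(e,True) \<notin> C" "(e,False) \<notin> C" by blast
  then show "?c $ e \<bullet> (l - ?c) $ e \<ge> 0"
  proof cases
    case 1
    then have "l$e > 0" using C by (auto simp: supp_def oval_def)
    then have "l$e \<ge> 1" using lint Ints_nonzero_abs_ge1[of "l$e"] by force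
    then show ?thesis using 1 by (simp add: chain_of_def)
  next
    case 2
    then have "l$e < 0" using C by (auto simp: supp_def oval_def)
    then have "l$e \<le> -1" using lint Ints_nonzero_abs_ge1[of "l$e"] by force
    then show ?thesis using 2 not_both by (simp add: chain_of_def)
  qed (simp add: chain_of_def)
qed

text \<open>If x lies in both cells V_O and V_l, and m and l - m are lattice vectors with
m.(l - m) >= 0, then comparing x with O, l, m and l - m forces m.(l - m) = 0 and
places x on the hyperplane of points equidistant from O and m.\<close>

lemma voronoi_wall_equations:
  fixes src tgt :: "'e::finite \<Rightarrow> 'v::finite"
  assumes x: "x \<in> voronoi src tgt 0 \<inter> voronoi src tgt l"
    and l: "l \<in> int_flows src tgt" and m: "m \<in> int_flows src tgt"
    and nonneg: "m \<bullet> (l - m) \<ge> 0"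
  shows "2 * (x \<bullet> m) = l \<bullet> m" and "m \<bullet> (l - m) = 0"
proof -
  have closest: "\<And>\<mu>. \<mu> \<in> int_flows src tgt \<Longrightarrow> qf x \<le> qf (x - \<mu>)"
    using x by (auto simp: voronoi_def)
  have "0 \<in> int_flows src tgt" by (simp add: int_flows_iff linear_0[OF linear_bd])
  then have "qf (x - l) \<le> qf x" using x by (force simp: voronoi_def)
  moreover have "qf x \<le> qf (x - l)" "qf x \<le> qf (x - m)" "qf x \<le> qf (x - (l - m))"
    using closest l m int_flows_diff[OF l m] by auto
  ultimately have "2 * (x \<bullet> l) = l \<bullet> l" "2 * (x \<bullet> m) \<le> m \<bullet> m"
    "2 * (x \<bullet> l) - 2 * (x \<bullet> m) \<le> l \<bullet> l - 2 * (l \<bullet> m) + m \<bullet> m"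
    by (simp_all add: qf_inner inner_diff_left inner_diff_right inner_commute)
  moreover have "l \<bullet> m - m \<bullet> m \<ge> 0" using nonneg by (simp add: inner_diff_right inner_commute)
  ultimately show "2 * (x \<bullet> m) = l \<bullet> m" "m \<bullet> (l - m) = 0"
    by (simp_all add: inner_diff_right inner_commute)
qed

text \<open>Consequently the wall V_O \<inter> V_l lies in the affine space through l/2 orthogonal to
the cycle space of supp l, which is spanned by its circuits.\<close>

lemma voronoi_wall_in_slice:
  fixes src tgt :: "'e::finite \<Rightarrow> 'v::finite"
  assumes l: "l \<in> int_flows src tgt"
  shows "voronoi src tgt 0 \<inter> voronoi src tgt l
    \<subseteq> (+) ((1/2) *\<^sub>R l) ` {z \<in> flows src tgt. \<forall>w\<in>cycle_space src tgt (fst ` supp l). orthogonal w z}"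
proof
  fix x assume x: "x \<in> voronoi src tgt 0 \<inter> voronoi src tgt l"
  have orth: "orthogonal w (x - (1/2) *\<^sub>R l)" if w: "w \<in> cycle_space src tgt (fst ` supp l)" for w
  proof -
    have "orthogonal (x - (1/2) *\<^sub>R l) c" if c: "c \<in> circuit_chains src tgt (supp l)" for c
    proof -
      obtain cs where cs: "circ src tgt cs" "set cs \<subseteq> supp l" "c = chain_of (set cs)"
        using c unfolding circuit_chains_def by blast
      have "c \<bullet> (l - c) \<ge> 0"
        using circuit_chain_inner_nonneg[OF _ circ_inj_fst[OF cs(1)] cs(2)] l cs(3)
        by (simp add: int_flows_iff)
      then have "2 * (x \<bullet> c) = l \<bullet> c"
        using voronoi_wall_equations(1)[OF x l] circ_int_flow[OF cs(1)] cs(3) by blast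
      then show ?thesis by (simp add: orthogonal_def inner_diff_left)
    qed
    then show ?thesis
      using orthogonal_to_span cycle_space_in_span_circuits[OF l w] orthogonal_commute by blast
  qed
  have "x - (1/2) *\<^sub>R l \<in> flows src tgt"
    using x l subspace_flows by (auto simp: voronoi_def int_flows_def intro: subspace_diff subspace_scale)
  with orth have "x - (1/2) *\<^sub>R l \<in> {z \<in> flows src tgt. \<forall>w\<in>cycle_space src tgt (fst ` supp l). orthogonal w z}"
    by blast
  from imageI[OF this, of "(+) ((1/2) *\<^sub>R l)"]
  show "x \<in> (+) ((1/2) *\<^sub>R l) ` {z \<in> flows src tgt. \<forall>w\<in>cycle_space src tgt (fst ` supp l). orthogonal w z}"
    by simp
qed

lemma voronoi_wall_affine:
  fixes src tgt :: "'e::finite \<Rightarrow> 'v::finite"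
  assumes l: "l \<in> int_flows src tgt"
  shows "\<exists>A. affine A \<and> A \<subseteq> flows src tgt
            \<and> aff_dim A = int (dim (flows src tgt)) - int (genus src tgt (supp l))
            \<and> voronoi src tgt 0 \<inter> voronoi src tgt l \<subseteq> A"
proof -
  have "l \<in> flows src tgt" using l by (simp add: int_flows_def)
  then have "(1/2) *\<^sub>R l \<in> flows src tgt" using subspace_flows by (rule subspace_scale[rotated])
  note slice = orthogonal_slice[OF subspace_flows subspace_cycle_space[of src tgt "fst ` supp l"]
      cycle_space_subset_flows this]
  show ?thesis
    unfolding genus_eq_dim_cycle_space using slice voronoi_wall_in_slice[OF l] by blast
qed

text \<open>V_O contains a neighbourhood of O in H, hence is full-dimensional in H.\<close>

lemma ball_subset_voronoi_origin:
  fixes src tgt :: "'e::finite \<Rightarrow> 'v::finite"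
  shows "flows src tgt \<inter> ball 0 (1/2) \<subseteq> voronoi src tgt 0"
proof
  fix x assume x: "x \<in> flows src tgt \<inter> ball 0 (1/2)"
  have "qf (x - 0) \<le> qf (x - \<mu>)" if \<mu>: "\<mu> \<in> int_flows src tgt" for \<mu>
  proof (cases "\<mu> = 0")
    case False
    then obtain e where e: "\<mu>$e \<noteq> 0" by (auto simp: vec_eq_iff)
    then have "\<bar>\<mu>$e\<bar> \<ge> 1" using \<mu> Ints_nonzero_abs_ge1 by (auto simp: int_flows_def)
    then have "norm \<mu> \<ge> 1" using component_le_norm_cart[of \<mu> e] by simp
    moreover have "norm (x - \<mu>) \<ge> norm \<mu> - norm x"
      using norm_triangle_ineq2[of \<mu> x] by (simp add: norm_minus_commute)
    ultimately have "norm x \<le> norm (x - \<mu>)" using x by simp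
    then show ?thesis by (simp add: qf_inner power2_norm_eq_inner[symmetric] power_mono)
  qed simp
  then show "x \<in> voronoi src tgt 0" using x by (simp add: voronoi_def)
qed

lemma aff_dim_voronoi_origin:
  fixes src tgt :: "'e::finite \<Rightarrow> 'v::finite"
  shows "aff_dim (voronoi src tgt 0) = int (dim (flows src tgt))"
proof (rule antisym)
  show "aff_dim (voronoi src tgt 0) \<le> int (dim (flows src tgt))"
    using aff_dim_subset[of "voronoi src tgt 0" "flows src tgt"]
    by (auto simp: voronoi_def aff_dim_subspace[OF subspace_flows])
  have "aff_dim (flows src tgt \<inter> ball 0 (1/2)) = aff_dim (flows src tgt)"
    using subspace_0[OF subspace_flows[of src tgt]]
    by (intro aff_dim_convex_Int_open subspace_imp_convex[OF subspace_flows]) auto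
  then show "int (dim (flows src tgt)) \<le> aff_dim (voronoi src tgt 0)"
    using aff_dim_subset[OF ball_subset_voronoi_origin[of src tgt]] by (simp add: aff_dim_subspace[OF subspace_flows])
qed

subsection \<open>Walls that are facets\<close>

text \<open>If the wall is a facet of V_O, the cycle space of supp l has dimension at most one
(the wall has codimension one but lies in a slice of codimension genus).\<close>

lemma facet_genus_le_1:
  fixes src tgt :: "'e::finite \<Rightarrow> 'v::finite"
  assumes l: "l \<in> int_flows src tgt"
    and facet: "(voronoi src tgt 0 \<inter> voronoi src tgt l) facet_of (voronoi src tgt 0)"
  shows "genus src tgt (supp l) \<le> 1" and "l \<noteq> 0"
proof -
  obtain A where "aff_dim A = int (dim (flows src tgt)) - int (genus src tgt (supp l))"
    and "voronoi src tgt 0 \<inter> voronoi src tgt l \<subseteq> A"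
    using voronoi_wall_affine[OF l] by blast
  then have "aff_dim (voronoi src tgt 0 \<inter> voronoi src tgt l)
      \<le> int (dim (flows src tgt)) - int (genus src tgt (supp l))"
    using aff_dim_subset by metis
  moreover have "aff_dim (voronoi src tgt 0 \<inter> voronoi src tgt l) = int (dim (flows src tgt)) - 1"
    using facet aff_dim_voronoi_origin by (simp add: facet_of_def)
  ultimately show "genus src tgt (supp l) \<le> 1" by linarith
  show "l \<noteq> 0" using facet by (auto simp: facet_of_def)
qed

text \<open>If the cycle space of supp l is at most one-dimensional, l is a positive multiple of
the chain of a circuit C in its support, so supp l = C; the wall equation
m.(l - m) = 0 then forces the multiple to be one.\<close>

lemma circuit_of_genus_le_1:
  fixes src tgt :: "'e::finite \<Rightarrow> 'v::finite"
  assumes l: "l \<in> int_flows src tgt" and "l \<noteq> 0" and genus: "genus src tgt (supp l) \<le> 1"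
    and wall: "x \<in> voronoi src tgt 0 \<inter> voronoi src tgt l"
  shows "is_circuit src tgt (supp l) \<and> l = chain_of (supp l)"
proof -
  have lfl: "bd src tgt l = 0" and lint: "\<forall>e. l$e \<in> \<int>" using l by (auto simp: int_flows_iff)
  obtain cs where cs: "circ src tgt cs" "set cs \<subseteq> supp l" using circuit_exists[OF lfl \<open>l \<noteq> 0\<close>] by blast
  define C where "C = set cs"
  define m where "m = chain_of C"
  have injC: "inj_on fst C" using circ_inj_fst[OF cs(1)] by (simp add: C_def)
  obtain d0 where d0: "d0 \<in> C" using cs(1) by (cases cs) (auto simp: circ_def C_def)
  have om: "oval m d = (if d \<in> C then 1 else if (fst d, \<not> snd d) \<in> C then -1 else 0)" for d
    unfolding m_def by (rule oval_chain_of[OF injC])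
  have "m \<noteq> 0"
  proof
    assume "m = 0"
    then have "oval m d0 = 0" by (simp add: oval_def)
    then show False using om[of d0] d0 by simp
  qed
  moreover have "m \<in> cycle_space src tgt (fst ` supp l)"
    using circ_flow[OF cs(1)] cs(2) om by (force simp: cycle_space_def m_def C_def chain_of_def)
  moreover have "l \<in> cycle_space src tgt (fst ` supp l)" using lfl by (simp add: cycle_space_def fst_supp)
  ultimately obtain c where c: "l = c *\<^sub>R m"
    using dim_le_1_multiple genus by (metis genus_eq_dim_cycle_space)
  have "oval l d0 > 0" using d0 cs(2) by (auto simp: C_def supp_def)
  then have "c > 0" using om[of d0] d0 c by (simp add: oval_def split: if_splits)
  moreover have "oval l d = c * oval m d" for d using c by (simp add: oval_def)
  ultimately have suppl: "supp l = C" using om by (auto simp: supp_def zero_less_mult_iff)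
  have "m \<bullet> (l - m) = 0"
    using voronoi_wall_equations(2)[OF wall l circ_int_flow[OF cs(1)]]
      circuit_chain_inner_nonneg[OF lint injC] cs(2) by (simp add: m_def C_def)
  then have "(c - 1) * (m \<bullet> m) = 0" using c by (simp add: inner_diff_right algebra_simps)
  then have "c = 1" using \<open>m \<noteq> 0\<close> by simp
  then show ?thesis using c suppl cs(1) by (auto simp: m_def is_circuit_iff_circ C_def)
qed

theorem mainTheorem3:
  fixes src tgt :: "'e::finite \<Rightarrow> 'v::finite" and l :: "real^'e"
  assumes "graph_connected src tgt"
    and "l \<in> int_flows src tgt"
    and "voronoi src tgt 0 \<inter> voronoi src tgt l \<noteq> {}"
  shows "(\<exists>A. affine A \<and> A \<subseteq> flows src tgt
            \<and> aff_dim A = int (dim (flows src tgt)) - int (genus src tgt (supp l))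
            \<and> voronoi src tgt 0 \<inter> voronoi src tgt l \<subseteq> A)
       \<and> ((voronoi src tgt 0 \<inter> voronoi src tgt l) facet_of (voronoi src tgt 0)
            \<longrightarrow> is_circuit src tgt (supp l) \<and> l = chain_of (supp l))"
proof -
  obtain x where x: "x \<in> voronoi src tgt 0 \<inter> voronoi src tgt l" using assms(3) by blast
  have "is_circuit src tgt (supp l) \<and> l = chain_of (supp l)"
    if facet: "(voronoi src tgt 0 \<inter> voronoi src tgt l) facet_of (voronoi src tgt 0)"
  proof -
    have "genus src tgt (supp l) \<le> 1" and "l \<noteq> 0"
      using facet_genus_le_1[OF assms(2) facet] by auto
    then show ?thesis using circuit_of_genus_le_1[OF assms(2) _ _ x] by simp
  qed
  with voronoi_wall_affine[OF assms(2)] show ?thesis by blast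
qed

end
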